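(* Let $G$ be an edge-coloured multigraph, $t \ge 5$, $M$ a rainbow matching of maximum size in $G$, $C_0$ the set of colours not used on $M$, and $N$ a $t$-auxiliary matching for $M$. If $v_e z$ is a $(C_0 \cup C_N)$-coloured edge with $e \in M_N$ and $z \notin V(N) \cup V(M\setminus M_N)$, then $z = m(x_e)$ or the edge $v_e z$ has colour $c(e)$.
   Context: A rainbow matching is a matching whose edges have pairwise distinct colours; an edge is $C$-coloured if its colour lies in $C$; $c(e)$ is the colour of edge $e$. Let $V$ be the vertex set of $G$. For a rainbow matching $M$ with unused colour set $C_0$, a $t$-auxiliary matching for $M$ is a matching $N$ each of whose edges has one endpoint in $V\setminus V(M)$ and the other in $V(M)$, such that for each edge of $N$ its pair of endpoints is joined by edges of at least $t$ distinct colours from $C_0$, and no two edges of $N$ intersect the same edge of $M$. $M_N \subseteq M$ is the set of edges of $M$ intersecting an edge of $N$; for $e \in M_N$, $x_e$ is the endpoint of $e$ lying in $V(N)$, $m(x_e)$ the other endpoint of $e$, and $v_e$ the vertex matched to $x_e$ in $N$. $C_N$ is the set of colours of the edges of $M_N$. *)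

theory Defs
  imports Main
begin

text \<open>An edge-coloured multigraph: vertex set V, edge identifiers E (parallel edges
allowed), endpoint map ends (each edge has exactly two distinct endpoints in V),
colouring col.\<close>

definition ec_multigraph :: "'v set \<Rightarrow> 'e set \<Rightarrow> ('e \<Rightarrow> 'v set) \<Rightarrow> bool" where
  "ec_multigraph V E ends \<longleftrightarrow> finite V \<and> finite E \<and>
     (\<forall>f\<in>E. ends f \<subseteq> V \<and> card (ends f) = 2)"

definition rainbow_matching :: "'e set \<Rightarrow> ('e \<Rightarrow> 'v set) \<Rightarrow> ('e \<Rightarrow> 'c) \<Rightarrow> 'e set \<Rightarrow> bool" where
  "rainbow_matching E ends col M \<longleftrightarrow> M \<subseteq> E \<and>
     (\<forall>e\<in>M. \<forall>f\<in>M. e \<noteq> f \<longrightarrow> ends e \<inter> ends f = {} \<and> col e \<noteq> col f)"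

definition max_rainbow_matching :: "'e set \<Rightarrow> ('e \<Rightarrow> 'v set) \<Rightarrow> ('e \<Rightarrow> 'c) \<Rightarrow> 'e set \<Rightarrow> bool" where
  "max_rainbow_matching E ends col M \<longleftrightarrow> rainbow_matching E ends col M \<and>
     (\<forall>M'. rainbow_matching E ends col M' \<longrightarrow> card M' \<le> card M)"

definition verts :: "('e \<Rightarrow> 'v set) \<Rightarrow> 'e set \<Rightarrow> 'v set" where
  "verts ends M = (\<Union>e\<in>M. ends e)"

definition unused_colours :: "('e \<Rightarrow> 'c) \<Rightarrow> 'e set \<Rightarrow> 'c set" where
  "unused_colours col M = - (col ` M)"

definition aux_matching ::
  "'v set \<Rightarrow> 'e set \<Rightarrow> ('e \<Rightarrow> 'v set) \<Rightarrow> ('e \<Rightarrow> 'c) \<Rightarrow> 'e set \<Rightarrow> nat \<Rightarrow> 'v set set \<Rightarrow> bool" where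
  "aux_matching V E ends col M t N \<longleftrightarrow>
     (\<forall>p\<in>N. \<exists>u w. p = {u, w} \<and> u \<in> V - verts ends M \<and> w \<in> verts ends M \<and>
        card {col f | f. f \<in> E \<and> ends f = {u, w} \<and> col f \<in> unused_colours col M} \<ge> t) \<and>
     (\<forall>p\<in>N. \<forall>q\<in>N. p \<noteq> q \<longrightarrow> p \<inter> q = {}) \<and>
     (\<forall>p\<in>N. \<forall>q\<in>N. \<forall>e\<in>M. p \<noteq> q \<longrightarrow> \<not> (p \<inter> ends e \<noteq> {} \<and> q \<inter> ends e \<noteq> {}))"

definition M_N :: "('e \<Rightarrow> 'v set) \<Rightarrow> 'e set \<Rightarrow> 'v set set \<Rightarrow> 'e set" where
  "M_N ends M N = {e \<in> M. \<exists>p\<in>N. p \<inter> ends e \<noteq> {}}"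

end

theory Submission
  imports Defs
begin

text \<open>Suppose the conclusion fails and let \<open>R\<close> consist of the edges of \<open>M\<close> through \<open>z\<close> or of
colour \<open>c(v\<^sub>e z)\<close>; then \<open>R \<subseteq> M\<^sub>N - {e}\<close> and \<open>|R| \<le> 2\<close>. Remove \<open>R\<close> from \<open>M\<close> and add \<open>v\<^sub>e z\<close>
together with, for every \<open>f \<in> R\<close>, a \<open>C\<^sub>0\<close>-coloured edge on the auxiliary pair at \<open>f\<close>. The
auxiliary pairs are disjoint, avoid \<open>v\<^sub>e\<close> and \<open>z\<close>, and each carries at least \<open>t > |R|\<close> colours
of \<open>C\<^sub>0\<close>, so distinct colours different from \<open>c(v\<^sub>e z)\<close> can be chosen greedily. The result is
a rainbow matching larger than \<open>M\<close>.\<close>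

lemma distinct_representatives_greedy:
  assumes "finite I" and "\<forall>i\<in>I. card I \<le> card (S i)"
  shows "\<exists>r. inj_on r I \<and> (\<forall>i\<in>I. r i \<in> S i)"
  using assms
proof (induction I rule: finite_induct)
  case empty
  show ?case by simp
next
  case (insert i I)
  then obtain r where r: "inj_on r I" "\<forall>j\<in>I. r j \<in> S j" by fastforce
  have "card I < card (S i)" using insert by simp
  then have "card (S i - r ` I) > 0"
    using diff_card_le_card_Diff[of "r ` I" "S i"] card_image_le[OF \<open>finite I\<close>, of r]
    by (simp add: \<open>finite I\<close>)
  then obtain c where c: "c \<in> S i" "c \<notin> r ` I" by (metis Diff_iff card_gt_0_iff ex_in_conv)
  have "inj_on (r(i := c)) (insert i I)" using r(1) c(2) insert(2)
    by (auto simp: inj_on_def image_iff)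
  moreover have "\<forall>j\<in>insert i I. (r(i := c)) j \<in> S j" using r(2) c(1) insert(2) by auto
  ultimately show ?case by blast
qed

lemma rainbow_matching_Un:
  assumes A: "rainbow_matching E ends col A" and B: "rainbow_matching E ends col B"
    and AB: "\<forall>a\<in>A. \<forall>b\<in>B. ends a \<inter> ends b = {} \<and> col a \<noteq> col b"
  shows "rainbow_matching E ends col (A \<union> B)"
  unfolding rainbow_matching_def
proof (intro conjI ballI impI)
  show "A \<union> B \<subseteq> E" using A B by (simp add: rainbow_matching_def)
next
  fix a b assume "a \<in> A \<union> B" "b \<in> A \<union> B" "a \<noteq> b"
  then show "ends a \<inter> ends b = {}" "col a \<noteq> col b"
    using A B AB unfolding rainbow_matching_def by (metis Int_commute UnE)+
qed

lemma rainbow_matching_image: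
  assumes "\<forall>f\<in>R. h f \<in> E"
    and "\<forall>f\<in>R. \<forall>f'\<in>R. f \<noteq> f' \<longrightarrow> ends (h f) \<inter> ends (h f') = {}"
    and "inj_on (col \<circ> h) R"
  shows "rainbow_matching E ends col (h ` R)"
  unfolding rainbow_matching_def
proof (intro conjI ballI impI)
  show "h ` R \<subseteq> E" using assms(1) by blast
next
  fix a b assume "a \<in> h ` R" "b \<in> h ` R" "a \<noteq> b"
  then obtain f f' where "f \<in> R" "f' \<in> R" "f \<noteq> f'" "a = h f" "b = h f'" by blast
  then show "ends a \<inter> ends b = {}" "col a \<noteq> col b"
    using assms(2,3) unfolding inj_on_def by auto
qed

lemma ends_subset_verts: "e \<in> M \<Longrightarrow> ends e \<subseteq> verts ends M"
  by (auto simp: verts_def)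

lemma max_rainbow_matching_exchange:
  assumes E: "finite E" and M: "max_rainbow_matching E ends col M"
    and R: "R \<subseteq> M" and T: "rainbow_matching E ends col T"
    and verts_disj: "verts ends T \<inter> verts ends (M - R) = {}"
    and col_disj: "col ` T \<inter> col ` (M - R) = {}"
  shows "card T \<le> card R"
proof -
  have RM: "rainbow_matching E ends col M" using M by (simp add: max_rainbow_matching_def)
  have fin: "finite M" "finite T"
    using RM T E by (meson finite_subset rainbow_matching_def)+
  have "rainbow_matching E ends col (M - R)"
    using RM by (auto simp: rainbow_matching_def)
  moreover note T
  moreover have "\<forall>a\<in>M - R. \<forall>b\<in>T. ends a \<inter> ends b = {} \<and> col a \<noteq> col b"
  proof (intro ballI)
    fix a b assume "a \<in> M - R" "b \<in> T"
    then show "ends a \<inter> ends b = {} \<and> col a \<noteq> col b"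
      using ends_subset_verts[of a "M - R" ends] ends_subset_verts[of b T ends] verts_disj col_disj
      by blast
  qed
  ultimately have "rainbow_matching E ends col ((M - R) \<union> T)"
    by (rule rainbow_matching_Un)
  then have "card ((M - R) \<union> T) \<le> card M"
    using M by (simp add: max_rainbow_matching_def)
  moreover have "(M - R) \<inter> T = {}" using col_disj by blast
  then have "card ((M - R) \<union> T) = card M - card R + card T"
    using fin R by (simp add: card_Un_disjoint card_Diff_subset finite_subset)
  moreover have "card R \<le> card M" using R fin by (simp add: card_mono)
  ultimately show ?thesis by linarith
qed

definition free_colours :: "'e set \<Rightarrow> ('e \<Rightarrow> 'v set) \<Rightarrow> ('e \<Rightarrow> 'c) \<Rightarrow> 'e set \<Rightarrow> 'v set \<Rightarrow> 'c set" where
  "free_colours E ends col M p = {col h | h. h \<in> E \<and> ends h = p \<and> col h \<in> unused_colours col M}"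

lemma aux_matching_pairE:
  assumes N: "aux_matching V E ends col M t N" and p: "p \<in> N"
  obtains u w where "p = {u, w}" "u \<notin> verts ends M" "w \<in> verts ends M"
    "t \<le> card (free_colours E ends col M p)"
proof -
  obtain u w where "p = {u, w}" "u \<in> V - verts ends M" "w \<in> verts ends M"
    "t \<le> card {col f | f. f \<in> E \<and> ends f = {u, w} \<and> col f \<in> unused_colours col M}"
    using bspec[OF conjunct1[OF N[unfolded aux_matching_def]] p] by (elim exE conjE)
  then show thesis by (intro that) (auto simp: free_colours_def)
qed

lemma aux_pair_misses_other_edges:
  assumes N: "aux_matching V E ends col M t N" and M: "rainbow_matching E ends col M"
    and p: "p \<in> N" and f: "f \<in> M" "p \<inter> ends f \<noteq> {}"
  shows "p \<inter> verts ends (M - {f}) = {}"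
proof -
  obtain u w where uw: "p = {u, w}" "u \<notin> verts ends M" "w \<in> verts ends M"
    using aux_matching_pairE[OF N p] by blast
  then have "w \<in> ends f" using f unfolding verts_def by blast
  then show ?thesis
    using uw f M unfolding rainbow_matching_def verts_def by blast
qed

lemma aux_pair_other_end_outside:
  assumes "aux_matching V E ends col M t N" and "{v, x} \<in> N" and "x \<in> verts ends M"
  shows "v \<notin> verts ends M"
proof -
  obtain u w where "{v, x} = {u, w}" "u \<notin> verts ends M" "w \<in> verts ends M"
    by (rule aux_matching_pairE[OF assms(1,2)])
  then show ?thesis using assms(3) by (auto simp: doubleton_eq_iff)
qed

lemma aux_pairs_disjoint:
  assumes "aux_matching V E ends col M t N" "p \<in> N" "q \<in> N" "p \<noteq> q"
  shows "p \<inter> q = {}"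
  using assms unfolding aux_matching_def by blast

lemma aux_pairs_at_edgesE:
  assumes N: "aux_matching V E ends col M t N" and M: "rainbow_matching E ends col M"
    and R: "R \<subseteq> M_N ends M N"
  obtains P where "\<forall>f\<in>R. P f \<in> N \<and> P f \<inter> ends f \<noteq> {} \<and> P f \<inter> verts ends (M - {f}) = {}"
    "\<forall>f\<in>R. \<forall>f'\<in>R. f \<noteq> f' \<longrightarrow> P f \<inter> P f' = {}"
proof -
  have RsubM: "R \<subseteq> M" using R by (auto simp: M_N_def)
  have "\<forall>f\<in>R. \<exists>p. p \<in> N \<and> p \<inter> ends f \<noteq> {}"
    using R unfolding M_N_def by blast
  then obtain P where P: "\<forall>f\<in>R. P f \<in> N \<and> P f \<inter> ends f \<noteq> {}"
    by metis
  have P_only: "P f \<inter> verts ends (M - {f}) = {}" if "f \<in> R" for f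
    using aux_pair_misses_other_edges[OF N M] P RsubM that by (meson subsetD)
  have "P f \<inter> P f' = {}" if "f \<in> R" "f' \<in> R" "f \<noteq> f'" for f f'
  proof -
    have "ends f' \<subseteq> verts ends (M - {f})"
      using RsubM that by (intro ends_subset_verts) blast
    then have "P f' \<inter> verts ends (M - {f}) \<noteq> {}"
      using P that(2) by blast
    then have "P f \<noteq> P f'" using P_only[OF that(1)] by blast
    then show ?thesis using aux_pairs_disjoint[OF N] P that by blast
  qed
  then show thesis using that P P_only by blast
qed

lemma aux_pairs_rainbow_edgesE:
  assumes N: "aux_matching V E ends col M t N" and R: "finite R" "card R < t"
    and P: "\<forall>f\<in>R. P f \<in> N"
  obtains h where "\<forall>f\<in>R. h f \<in> E \<and> ends (h f) = P f \<and> col (h f) \<in> unused_colours col M \<and> col (h f) \<noteq> c"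
    "inj_on (col \<circ> h) R"
proof -
  define S where "S f = free_colours E ends col M (P f) - {c}" for f
  have "card R \<le> card (S f)" if "f \<in> R" for f
  proof -
    have "P f \<in> N" using P that by blast
    then obtain u w where "t \<le> card (free_colours E ends col M (P f))"
      by (rule aux_matching_pairE[OF N])
    then show ?thesis
      using R(2) diff_card_le_card_Diff[of "{c}" "free_colours E ends col M (P f)"]
      unfolding S_def by simp
  qed
  then obtain r where r: "inj_on r R" "\<forall>f\<in>R. r f \<in> S f"
    using distinct_representatives_greedy[OF R(1)] by blast
  have "\<forall>f\<in>R. \<exists>h. h \<in> E \<and> ends h = P f \<and> col h = r f \<and> col h \<in> unused_colours col M"
    using r(2) unfolding S_def free_colours_def by fastforce
  then obtain h where h: "\<forall>f\<in>R. h f \<in> E \<and> ends (h f) = P f \<and> col (h f) = r f \<and>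
      col (h f) \<in> unused_colours col M"
    by metis
  have "inj_on (col \<circ> h) R" using r(1) h by (simp add: inj_on_def)
  moreover have "\<forall>f\<in>R. col (h f) \<noteq> c" using h r(2) unfolding S_def by fastforce
  ultimately show thesis using that h by blast
qed

lemma max_rainbow_matching_no_aux_augmentation:
  assumes E: "finite E" and M: "max_rainbow_matching E ends col M"
    and N: "aux_matching V E ends col M t N"
    and R: "R \<subseteq> M_N ends M N" "card R < t"
    and g: "g \<in> E"
    and g_pairs: "\<forall>p\<in>N. \<forall>f\<in>R. p \<inter> ends f \<noteq> {} \<longrightarrow> p \<inter> ends g = {}"
    and g_verts: "ends g \<inter> verts ends (M - R) = {}"
    and g_col: "col g \<notin> col ` (M - R)"
  shows False
proof -
  have RM: "rainbow_matching E ends col M" using M by (simp add: max_rainbow_matching_def)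
  have RsubM: "R \<subseteq> M" using R(1) by (auto simp: M_N_def)
  have finR: "finite R"
    using RsubM RM E by (meson finite_subset rainbow_matching_def)
  obtain P where P: "\<forall>f\<in>R. P f \<in> N \<and> P f \<inter> ends f \<noteq> {} \<and> P f \<inter> verts ends (M - {f}) = {}"
    and P_disjoint: "\<forall>f\<in>R. \<forall>f'\<in>R. f \<noteq> f' \<longrightarrow> P f \<inter> P f' = {}"
    using aux_pairs_at_edgesE[OF N RM R(1)] by blast
  obtain h where h: "\<forall>f\<in>R. h f \<in> E \<and> ends (h f) = P f \<and> col (h f) \<in> unused_colours col M \<and>
      col (h f) \<noteq> col g" and col_h_inj: "inj_on (col \<circ> h) R"
    using aux_pairs_rainbow_edgesE[OF N finR R(2)] P by blast
  define T where "T = insert g (h ` R)"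
  have "rainbow_matching E ends col (h ` R)"
    using h P_disjoint col_h_inj by (intro rainbow_matching_image) auto
  moreover have "rainbow_matching E ends col {g}" using g by (simp add: rainbow_matching_def)
  moreover have "ends g \<inter> ends (h f) = {} \<and> col g \<noteq> col (h f)" if "f \<in> R" for f
  proof -
    have "P f \<in> N" "P f \<inter> ends f \<noteq> {}" using P that by blast+
    then have "P f \<inter> ends g = {}" using g_pairs that by blast
    moreover have "ends (h f) = P f" "col (h f) \<noteq> col g" using h that by blast+
    ultimately show ?thesis by (simp add: Int_commute)
  qed
  ultimately have T_rainbow: "rainbow_matching E ends col T"
    unfolding T_def using rainbow_matching_Un[of E ends col "{g}" "h ` R"] by simp
  have "ends (h f) \<inter> verts ends (M - R) = {}" if "f \<in> R" for f
    using P h that unfolding verts_def by blast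
  then have T_verts: "verts ends T \<inter> verts ends (M - R) = {}"
    using g_verts unfolding T_def verts_def by blast
  have T_col: "col ` T \<inter> col ` (M - R) = {}"
    using g_col h unfolding T_def unused_colours_def by blast
  have "inj_on h R" using col_h_inj by (rule inj_on_imageI2)
  moreover have "g \<notin> h ` R" using h by blast
  ultimately have "card T = Suc (card R)"
    unfolding T_def using finR by (simp add: card_image)
  then show False
    using max_rainbow_matching_exchange[OF E M RsubM T_rainbow T_verts T_col] by simp
qed

lemma rainbow_matching_card_at_vertex_or_colour:
  assumes M: "rainbow_matching E ends col M" and fin: "finite M"
  shows "card {f \<in> M. z \<in> ends f \<or> col f = c} \<le> 2"
proof -
  have "card {f \<in> M. z \<in> ends f} \<le> 1" "card {f \<in> M. col f = c} \<le> 1"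
    using M fin unfolding rainbow_matching_def by (auto simp: card_le_Suc0_iff_eq)
  moreover have "{f \<in> M. z \<in> ends f \<or> col f = c} = {f \<in> M. z \<in> ends f} \<union> {f \<in> M. col f = c}"
    by blast
  then have "card {f \<in> M. z \<in> ends f \<or> col f = c} \<le> card {f \<in> M. z \<in> ends f} + card {f \<in> M. col f = c}"
    by (simp add: card_Un_le)
  ultimately show ?thesis by linarith
qed

lemma M_N_contains_edges_at_vertex_or_colour:
  assumes M: "rainbow_matching E ends col M"
    and z: "z \<notin> verts ends (M - M_N ends M N)"
    and c: "c \<in> unused_colours col M \<union> col ` (M_N ends M N)"
  shows "{f \<in> M. z \<in> ends f \<or> col f = c} \<subseteq> M_N ends M N"
proof
  fix f assume "f \<in> {f \<in> M. z \<in> ends f \<or> col f = c}"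
  then consider "f \<in> M" "z \<in> ends f" | "f \<in> M" "col f = c" by blast
  then show "f \<in> M_N ends M N"
  proof cases
    case 1
    then show ?thesis using z ends_subset_verts[of f "M - M_N ends M N" ends] by blast
  next
    case 2
    then obtain f' where "f' \<in> M_N ends M N" "col f' = col f"
      using c unfolding unused_colours_def by auto
    moreover have "f' \<in> M" using calculation(1) by (simp add: M_N_def)
    ultimately show ?thesis using 2 M unfolding rainbow_matching_def by metis
  qed
qed

lemma aux_pair_end_not_in_pair_at_other_edge:
  assumes N: "aux_matching V E ends col M t N" and M: "rainbow_matching E ends col M"
    and e: "e \<in> M" "{v, x} \<in> N" "x \<in> ends e"
    and f: "f \<in> M" "f \<noteq> e" and p: "p \<in> N" "p \<inter> ends f \<noteq> {}"
  shows "v \<notin> p"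
proof -
  have "x \<in> verts ends (M - {f})" using e f ends_subset_verts[of e "M - {f}" ends] by blast
  then have "p \<noteq> {v, x}" using aux_pair_misses_other_edges[OF N M p(1) f(1) p(2)] by blast
  then show ?thesis using aux_pairs_disjoint[OF N p(1) e(2)] by blast
qed

theorem lemma2p7:
  fixes V :: "'v set" and E :: "'e set" and ends :: "'e \<Rightarrow> 'v set"
    and col :: "'e \<Rightarrow> 'c" and M :: "'e set" and N :: "'v set set" and t :: nat
  assumes G: "ec_multigraph V E ends"
    and t: "t \<ge> 5"
    and M: "max_rainbow_matching E ends col M"
    and N: "aux_matching V E ends col M t N"
    and e: "e \<in> M_N ends M N"
    and xe: "ends e = {x, y}" "x \<noteq> y" "{v, x} \<in> N"
    and g: "g \<in> E" "ends g = {v, z}"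
    and gcol: "col g \<in> unused_colours col M \<union> col ` (M_N ends M N)"
    and z: "z \<notin> \<Union>N \<union> verts ends (M - M_N ends M N)"
  shows "z = y \<or> col g = col e"
proof (rule ccontr)
  assume neg: "\<not> (z = y \<or> col g = col e)"
  have E: "finite E" using G by (simp add: ec_multigraph_def)
  have RM: "rainbow_matching E ends col M" using M by (simp add: max_rainbow_matching_def)
  have finM: "finite M" using RM E by (meson finite_subset rainbow_matching_def)
  have eM: "e \<in> M" using e by (simp add: M_N_def)
  have "x \<in> verts ends M" using ends_subset_verts[of e M ends] eM xe(1) by blast
  then have v_out: "v \<notin> verts ends M" by (rule aux_pair_other_end_outside[OF N xe(3)])
  define R where "R = {f \<in> M. z \<in> ends f \<or> col f = col g}"
  have R_MN: "R \<subseteq> M_N ends M N"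
    unfolding R_def using z by (intro M_N_contains_edges_at_vertex_or_colour[OF RM _ gcol]) blast
  have R_card: "card R < t"
    using rainbow_matching_card_at_vertex_or_colour[OF RM finM, of z "col g"] t
    unfolding R_def by linarith
  have "z \<noteq> x" using z xe(3) by blast
  then have "z \<notin> ends e" using neg unfolding xe(1) by blast
  then have "e \<notin> R" using neg unfolding R_def by auto
  have g_pairs: "\<forall>p\<in>N. \<forall>f\<in>R. p \<inter> ends f \<noteq> {} \<longrightarrow> p \<inter> ends g = {}"
  proof (intro ballI impI)
    fix p f assume "p \<in> N" "f \<in> R" "p \<inter> ends f \<noteq> {}"
    moreover have "f \<noteq> e" "f \<in> M" using \<open>e \<notin> R\<close> \<open>f \<in> R\<close> unfolding R_def by auto
    ultimately have "v \<notin> p"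
      using aux_pair_end_not_in_pair_at_other_edge[OF N RM eM xe(3)] xe(1) by blast
    moreover have "z \<notin> p" using z \<open>p \<in> N\<close> by blast
    ultimately show "p \<inter> ends g = {}" unfolding g(2) by blast
  qed
  have "z \<notin> verts ends (M - R)" unfolding R_def verts_def by blast
  moreover have "verts ends (M - R) \<subseteq> verts ends M" unfolding verts_def by blast
  ultimately have "ends g \<inter> verts ends (M - R) = {}" using v_out unfolding g(2) by blast
  moreover have "col g \<notin> col ` (M - R)" unfolding R_def by auto
  ultimately show False
    by (rule max_rainbow_matching_no_aux_augmentation[OF E M N R_MN R_card g(1) g_pairs])
qed

end
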